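(* Let $C\in\mathcal L(\mathcal X,\mathcal Y)$ and $\mathbf A=(A_1,\dots,A_d)\in\mathcal L(\mathcal X)^d$. Suppose the output-stable pair $(C,\mathbf A)$ is observable and $\mathbf A$ is $C$-abelian. Then $\mathbf A$ is commutative: $A_iA_j=A_jA_i$ for all $i,j=1,\dots,d$.
   Context: $\mathcal F_d$: free semigroup of words on $\{1,\dots,d\}$; $\mathbf A^v=A_{i_N}\cdots A_{i_1}$ for $v=i_N\cdots i_1$. Output-stable: $x\mapsto\{C\mathbf A^vx\}_{v\in\mathcal F_d}$ is bounded from $\mathcal X$ into $\ell^2_{\mathcal Y}(\mathcal F_d)$. Observable: $C\mathbf A^vx=0$ for all $v$ implies $x=0$. The abelianization $\mathbf a\colon\mathcal F_d\to\mathbb Z^d_+$ sends a word to the vector counting occurrences of each letter; $\mathbf A$ is $C$-abelian if $C\mathbf A^v=C\mathbf A^u$ whenever $\mathbf a(v)=\mathbf a(u)$. *)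

theory Defs
  imports "HOL-Analysis.Analysis"
begin

text \<open>Words of the free semigroup on letters 1..d are lists; the list [i_N, ..., i_1]
  represents the word i_N ... i_1. The empty list is the unit word (empty word).\<close>

definition words :: "nat \<Rightarrow> nat list set" where
  "words d = {v. set v \<subseteq> {1..d}}"

definition word_op :: "(nat \<Rightarrow> 'x \<Rightarrow> 'x) \<Rightarrow> nat list \<Rightarrow> 'x \<Rightarrow> 'x" where
  "word_op A v = foldr (\<lambda>i acc. A i \<circ> acc) v id"

definition abel :: "nat list \<Rightarrow> nat \<Rightarrow> nat" where
  "abel v = (\<lambda>i. count_list v i)"

definition output_stable ::
  "('x::real_normed_vector \<Rightarrow> 'y::real_normed_vector) \<Rightarrow> (nat \<Rightarrow> 'x \<Rightarrow> 'x) \<Rightarrow> nat \<Rightarrow> bool" where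
  "output_stable C A d \<longleftrightarrow>
     (\<forall>x. (\<lambda>v. (norm (C (word_op A v x)))\<^sup>2) summable_on words d) \<and>
     (\<exists>K. \<forall>x. (\<Sum>\<^sub>\<infinity>v\<in>words d. (norm (C (word_op A v x)))\<^sup>2) \<le> K * (norm x)\<^sup>2)"

definition observable ::
  "('x::zero \<Rightarrow> 'y::zero) \<Rightarrow> (nat \<Rightarrow> 'x \<Rightarrow> 'x) \<Rightarrow> nat \<Rightarrow> bool" where
  "observable C A d \<longleftrightarrow>
     (\<forall>x. (\<forall>v\<in>words d. C (word_op A v x) = 0) \<longrightarrow> x = 0)"

definition C_abelian ::
  "('x \<Rightarrow> 'y) \<Rightarrow> (nat \<Rightarrow> 'x \<Rightarrow> 'x) \<Rightarrow> nat \<Rightarrow> bool" where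
  "C_abelian C A d \<longleftrightarrow>
     (\<forall>u\<in>words d. \<forall>v\<in>words d. abel v = abel u \<longrightarrow> C \<circ> word_op A v = C \<circ> word_op A u)"

end

theory Submission
  imports Defs
begin

text \<open>The words v i j and v j i have the same abelianization, so C-abelianness gives
  C A^v A_i A_j = C A^v A_j A_i for every word v. By linearity the commutator
  (A_i A_j - A_j A_i) x is thus annihilated by every C A^v, and observability forces it to vanish.\<close>

lemma word_op_Nil [simp]: "word_op A [] = id"
  by (simp add: word_op_def)

lemma word_op_Cons [simp]: "word_op A (i # v) = A i \<circ> word_op A v"
  unfolding word_op_def by simp

lemma word_op_append: "word_op A (v @ w) = word_op A v \<circ> word_op A w"
  by (induction v) auto

lemma linear_word_op:
  assumes "\<And>i. i \<in> set v \<Longrightarrow> linear (A i)"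
  shows "linear (word_op A v)"
  using assms by (induction v) (auto intro: linear_compose linear_id simp del: id_apply)

lemma abel_append_commute: "abel (u @ v @ w) = abel (u @ w @ v)"
  by (simp add: abel_def add_ac)

lemma C_abelian_swap_last:
  assumes "C_abelian C A d" and "v \<in> words d" and "i \<in> {1..d}" and "j \<in> {1..d}"
  shows "C (word_op A v (A i (A j x))) = C (word_op A v (A j (A i x)))"
proof -
  have "v @ [i] @ [j] \<in> words d" and "v @ [j] @ [i] \<in> words d"
    using assms(2-4) by (auto simp: words_def)
  then have "C \<circ> word_op A (v @ [i] @ [j]) = C \<circ> word_op A (v @ [j] @ [i])"
    using assms(1) abel_append_commute unfolding C_abelian_def by blast
  then show ?thesis
    by (simp add: word_op_append fun_eq_iff)
qed

lemma C_abelian_observable_imp_commute: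
  fixes C :: "'x::real_vector \<Rightarrow> 'y::real_vector"
  assumes "linear C" and "\<And>i. i \<in> {1..d} \<Longrightarrow> linear (A i)"
    and "observable C A d" and "C_abelian C A d"
    and "i \<in> {1..d}" and "j \<in> {1..d}"
  shows "A i \<circ> A j = A j \<circ> A i"
proof
  fix x
  let ?commutator = "A i (A j x) - A j (A i x)"
  have "C (word_op A v ?commutator) = 0" if "v \<in> words d" for v
  proof -
    have "linear (word_op A v)"
      using that assms(2) by (intro linear_word_op) (auto simp: words_def)
    then have "linear (C \<circ> word_op A v)"
      using assms(1) by (rule linear_compose)
    from linear_diff[OF this] have "C (word_op A v ?commutator)
        = C (word_op A v (A i (A j x))) - C (word_op A v (A j (A i x)))"
      by simp
    then show ?thesis
      using C_abelian_swap_last[OF assms(4) that assms(5,6)] by simp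
  qed
  then have "?commutator = 0"
    using assms(3) unfolding observable_def by blast
  then show "(A i \<circ> A j) x = (A j \<circ> A i) x"
    by simp
qed

theorem proposition3p6:
  fixes C :: "'x::{real_inner,complete_space} \<Rightarrow> 'y::{real_inner,complete_space}"
    and A :: "nat \<Rightarrow> 'x \<Rightarrow> 'x"
    and d :: nat
  assumes "bounded_linear C"
    and "\<And>i. i \<in> {1..d} \<Longrightarrow> bounded_linear (A i)"
    and "output_stable C A d"
    and "observable C A d"
    and "C_abelian C A d"
  shows "\<forall>i\<in>{1..d}. \<forall>j\<in>{1..d}. A i \<circ> A j = A j \<circ> A i"
proof (intro ballI)
  fix i j
  assume "i \<in> {1..d}" and "j \<in> {1..d}"
  moreover have "linear (A k)" if "k \<in> {1..d}" for k
    using assms(2)[OF that] by (rule bounded_linear.linear)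
  ultimately show "A i \<circ> A j = A j \<circ> A i"
    using C_abelian_observable_imp_commute[OF bounded_linear.linear[OF assms(1)] _ assms(4,5)]
    by blast
qed

end
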